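(* Let $(V,\cdot)$ be a nondegenerate intersection pairing of odd type that is not positive definite. Then there exists $v\in V$ such that $v\cdot v<0$ and $v\cdot v$ is odd.
   Context: An intersection pairing is a finitely generated free abelian group $V$ with a symmetric bilinear form $V\times V\to\mathbf{Z}$, $(u,w)\mapsto u\cdot w$; nondegenerate means the adjoint $V\to\mathrm{Hom}(V,\mathbf{Z})$ has nonzero determinant. It has odd type if $w\cdot w$ is odd for some $w\in V$. Positive definite means $u\cdot u>0$ for all $u\neq 0$. *)

theory Defs
  imports "HOL-Analysis.Analysis"
begin

text \<open>An intersection pairing: a finitely generated free abelian group V, modelled as
  \<open>int ^ 'n\<close> for a finite index type 'n (a chosen basis), with a symmetric
  Z-bilinear form \<open>b\<close>.\<close>

definition intersection_pairing :: "(int ^ 'n \<Rightarrow> int ^ 'n \<Rightarrow> int) \<Rightarrow> bool" where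
  "intersection_pairing b \<longleftrightarrow>
     (\<forall>u v w. b (u + v) w = b u w + b v w) \<and>
     (\<forall>c u w. b (c *s u) w = c * b u w) \<and>
     (\<forall>u w. b u w = b w u)"

text \<open>Matrix of the adjoint V \<rightarrow> Hom(V,Z) with respect to the standard basis and its dual.\<close>
definition gram_matrix :: "(int ^ 'n \<Rightarrow> int ^ 'n \<Rightarrow> int) \<Rightarrow> int ^ 'n ^ 'n" where
  "gram_matrix b = (\<chi> i j. b (axis i 1) (axis j 1))"

definition nondegenerate_pairing :: "(int ^ 'n \<Rightarrow> int ^ 'n \<Rightarrow> int) \<Rightarrow> bool" where
  "nondegenerate_pairing b \<longleftrightarrow> det (gram_matrix b) \<noteq> 0"

definition odd_type :: "(int ^ 'n \<Rightarrow> int ^ 'n \<Rightarrow> int) \<Rightarrow> bool" where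
  "odd_type b \<longleftrightarrow> (\<exists>w. odd (b w w))"

definition positive_definite_pairing :: "(int ^ 'n \<Rightarrow> int ^ 'n \<Rightarrow> int) \<Rightarrow> bool" where
  "positive_definite_pairing b \<longleftrightarrow> (\<forall>u. u \<noteq> 0 \<longrightarrow> b u u > 0)"

end

theory Submission
  imports Defs
begin

text \<open>Pick \<open>u \<noteq> 0\<close> with \<open>u \<cdot> u \<le> 0\<close>. If \<open>u \<cdot> u\<close> is odd it is negative and we are done.
  Otherwise \<open>u \<cdot> u\<close> is even, so \<open>(w + k u) \<cdot> (w + k u) = w \<cdot> w + 2 k (w \<cdot> u) + k\<^sup>2 (u \<cdot> u)\<close>
  has the parity of \<open>w \<cdot> w\<close>. Nondegeneracy provides \<open>x\<close> with \<open>u \<cdot> x \<noteq> 0\<close>, so if \<open>w \<cdot> w\<close>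
  is odd then one of \<open>w\<close>, \<open>w + 2 x\<close> is an odd vector pairing nontrivially with \<open>u\<close>; for it the quadratic
  in \<open>k\<close> above is odd and, as \<open>u \<cdot> u \<le> 0\<close>, becomes negative for a suitable \<open>k\<close>.\<close>

lemma intersection_pairingD:
  assumes "intersection_pairing b"
  shows intersection_pairing_add_left: "b (u + v) w = b u w + b v w"
    and intersection_pairing_add_right: "b w (u + v) = b w u + b w v"
    and intersection_pairing_scale_left: "b (c *s u) w = c * b u w"
    and intersection_pairing_scale_right: "b w (c *s u) = c * b w u"
    and intersection_pairing_sym: "b u w = b w u"
  using assms unfolding intersection_pairing_def by metis+

lemma intersection_pairing_zero_left:
  assumes "intersection_pairing b"
  shows "b 0 w = 0"
  using intersection_pairing_scale_left[OF assms, of 0 0 w] by simp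

lemma intersection_pairing_sum_left:
  assumes "intersection_pairing b"
  shows "b (sum f S) w = (\<Sum>i\<in>S. b (f i) w)"
  by (induction S rule: infinite_finite_induct)
    (simp_all add: intersection_pairing_zero_left[OF assms] intersection_pairing_add_left[OF assms])

lemma intersection_pairing_axis_right:
  assumes "intersection_pairing b"
  shows "b u (axis j 1) = (u v* gram_matrix b) $ j"
proof -
  have "b u (axis j 1) = b (\<Sum>i\<in>UNIV. u $ i *s axis i 1) (axis j 1)"
    by (simp add: basis_expansion)
  also have "\<dots> = (\<Sum>i\<in>UNIV. u $ i * b (axis i 1) (axis j 1))"
    by (simp add: intersection_pairing_sum_left[OF assms] intersection_pairing_scale_left[OF assms])
  finally show ?thesis
    by (simp add: vector_matrix_mult_def gram_matrix_def)
qed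

lemma intersection_pairing_square_add_scaled:
  assumes "intersection_pairing b"
  shows "b (w + k *s u) (w + k *s u) = b w w + 2 * k * b w u + k\<^sup>2 * b u u"
  using intersection_pairing_sym[OF assms, of u w]
  by (simp add: intersection_pairingD[OF assms] algebra_simps power2_eq_square)

lemma det_of_int:
  fixes A :: "int ^ 'n ^ 'n"
  shows "det (\<chi> i j. of_int (A $ i $ j) :: 'a::comm_ring_1 ^ 'n ^ 'n) = of_int (det A)"
  unfolding det_def by (simp add: of_int_sum of_int_prod)

lemma vector_matrix_mult_eq_0_int:
  fixes A :: "int ^ 'n ^ 'n"
  assumes "det A \<noteq> 0" and "x v* A = 0"
  shows "x = 0"
proof -
  define R :: "real ^ 'n ^ 'n" where "R = (\<chi> i j. of_int (A $ i $ j))"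
  define y :: "real ^ 'n" where "y = (\<chi> i. of_int (x $ i))"
  have "det R \<noteq> 0"
    using assms(1) by (simp add: R_def det_of_int)
  then obtain R' where R': "R ** R' = mat 1"
    using invertible_det_nz[of R] unfolding invertible_def by blast
  have "y v* R = (\<chi> j. of_int ((x v* A) $ j))"
    by (simp add: vec_eq_iff vector_matrix_mult_def R_def y_def of_int_sum)
  then have "y v* R = 0"
    using assms(2) by (simp add: vec_eq_iff)
  then have "y = 0"
    by (metis R' vector_matrix_mul_assoc vector_matrix_mul_rid vector_matrix_mult_0)
  then show ?thesis
    by (simp add: y_def vec_eq_iff)
qed

lemma nondegenerate_pairing_witness:
  assumes "intersection_pairing b" and "nondegenerate_pairing b" and "u \<noteq> 0"
  shows "\<exists>x. b u x \<noteq> 0"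
proof (rule ccontr)
  assume "\<nexists>x. b u x \<noteq> 0"
  then have "u v* gram_matrix b = 0"
    by (simp add: vec_eq_iff intersection_pairing_axis_right[OF assms(1), symmetric])
  then have "u = 0"
    using assms(2) vector_matrix_mult_eq_0_int unfolding nondegenerate_pairing_def by blast
  with assms(3) show False ..
qed

lemma odd_vector_pairing_nonzero:
  assumes ip: "intersection_pairing b" and "nondegenerate_pairing b" and "odd_type b"
    and "u \<noteq> 0"
  shows "\<exists>w. odd (b w w) \<and> b w u \<noteq> 0"
proof -
  obtain w where w: "odd (b w w)"
    using assms(3) unfolding odd_type_def by blast
  obtain x where x: "b u x \<noteq> 0"
    using nondegenerate_pairing_witness[OF ip assms(2,4)] by blast
  show ?thesis
  proof (cases "b w u = 0")
    case True
    have "odd (b (w + 2 *s x) (w + 2 *s x))"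
      using w by (simp add: intersection_pairing_square_add_scaled[OF ip])
    moreover have "b (w + 2 *s x) u = 2 * b u x"
      using True intersection_pairing_sym[OF ip, of x u]
      by (simp add: intersection_pairingD[OF ip])
    ultimately show ?thesis
      using x by fastforce
  qed (use w in blast)
qed

lemma int_quadratic_negative:
  fixes p a c :: int
  assumes "a \<noteq> 0" and "c \<le> 0"
  shows "\<exists>k. p + 2 * k * a + k\<^sup>2 * c < 0"
proof
  define N where "N = \<bar>p\<bar> + 1"
  have "a\<^sup>2 \<ge> 1"
    using assms(1) by (smt (verit) power2_less_eq_zero_iff zero_less_power2)
  then have "2 * N * a\<^sup>2 \<ge> 2 * N"
    using mult_left_mono[of 1 "a\<^sup>2" "2 * N"] unfolding N_def by simp
  moreover have "(- a * N)\<^sup>2 * c \<le> 0"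
    using assms(2) by (simp add: mult_nonneg_nonpos)
  ultimately show "p + 2 * (- a * N) * a + (- a * N)\<^sup>2 * c < 0"
    unfolding N_def by (simp add: power2_eq_square algebra_simps)
qed

theorem mainTheorem5:
  fixes b :: "int ^ 'n \<Rightarrow> int ^ 'n \<Rightarrow> int"
  assumes "intersection_pairing b"
    and "nondegenerate_pairing b"
    and "odd_type b"
    and "\<not> positive_definite_pairing b"
  shows "\<exists>v. b v v < 0 \<and> odd (b v v)"
proof -
  obtain u where "u \<noteq> 0" and u: "b u u \<le> 0"
    using assms(4) unfolding positive_definite_pairing_def by force
  show ?thesis
  proof (cases "odd (b u u)")
    case True
    then have "b u u \<noteq> 0" by presburger
    with u True show ?thesis by (intro exI[of _ u]) simp
  next
    case False
    obtain w where w: "odd (b w w)" and "b w u \<noteq> 0"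
      using odd_vector_pairing_nonzero[OF assms(1-3) \<open>u \<noteq> 0\<close>] by blast
    then obtain k where "b w w + 2 * k * b w u + k\<^sup>2 * b u u < 0"
      using int_quadratic_negative u by blast
    moreover have "odd (b w w + 2 * k * b w u + k\<^sup>2 * b u u)"
      using w False by simp
    ultimately show ?thesis
      by (metis intersection_pairing_square_add_scaled[OF assms(1)])
  qed
qed

end
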